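(* Let $\varphi:X\to\mathbb R$ be Lipschitz continuous, let $u:X\to\mathbb R$ be a calibrated subaction of $\varphi$ and $\underline{y}^{(0)}\in X$. For each $n\ge1$ let $\underline{y}^{(-n)}$ be a point with $\sigma(\underline{y}^{(-n)})=\underline{y}^{(-n+1)}$ and $u(\underline{y}^{(-n+1)})=\varphi(\underline{y}^{(-n)})+u(\underline{y}^{(-n)})-\alpha_\varphi$. Then every accumulation point of $\{\underline{y}^{(-n)}\}_{n\ge1}$ belongs to $\Omega_\varphi$.
   Context: $X=[0,1]^{\mathbb N_0}$ with metric $d_X(\underline{x},\underline{y})=\sum_{i\ge0}|x_i-y_i|/2^{i+1}$ and shift $\sigma(\underline{x})_i=x_{i+1}$. $\alpha_\varphi=\inf_\mu\int\varphi\,d\mu$ over $\sigma$-invariant Borel probability measures. $B(\underline{x},\underline{y},n;\varepsilon)=\{\underline{z}: d_X(\underline{x},\underline{z})<\varepsilon,\ d_X(\sigma^n\underline{z},\underline{y})<\varepsilon\}$. Mañé potential $S_\varphi(\underline{x},\underline{y})=\lim_{\varepsilon\to0}\inf\{\sum_{i=0}^{n-1}(\varphi(\sigma^i\underline{z})-\alpha_\varphi): n\in\mathbb N,\ \underline{z}\in B(\underline{x},\underline{y},n;\varepsilon)\}$; Aubry set $\Omega_\varphi=\{\underline{x}: S_\varphi(\underline{x},\underline{x})=0\}$. A subaction is a continuous $u$ with $u(\underline{x})+\varphi(\underline{x})\ge u(\sigma\underline{x})+\alpha_\varphi$ for all $\underline{x}$; it is calibrated if $\min_{\sigma(\underline{y})=\underline{x}}(\varphi(\underline{y})+u(\underline{y}))=u(\underline{x})+\alpha_\varphi$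 for every $\underline{x}$. *)

theory Defs
  imports "HOL-Probability.Probability"
begin

definition XX :: "(nat \<Rightarrow> real) set" where
  "XX = {x. \<forall>i. 0 \<le> x i \<and> x i \<le> 1}"

definition dX :: "(nat \<Rightarrow> real) \<Rightarrow> (nat \<Rightarrow> real) \<Rightarrow> real" where
  "dX x y = (\<Sum>i. \<bar>x i - y i\<bar> / 2 ^ (i + 1))"

definition shift :: "(nat \<Rightarrow> real) \<Rightarrow> (nat \<Rightarrow> real)" where
  "shift x = (\<lambda>i. x (Suc i))"

text \<open>Borel probability measures on X (Borel sets of the product topology restricted
  to X, which coincides with the topology of dX on X) that are shift-invariant.\<close>
definition invariant_prob :: "(nat \<Rightarrow> real) measure \<Rightarrow> bool" where
  "invariant_prob M \<longleftrightarrow> prob_space M \<and> sets M = sets (restrict_space borel XX) \<and>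
     (\<forall>A \<in> sets M. emeasure M (shift -` A \<inter> XX) = emeasure M A)"

definition alpha :: "((nat \<Rightarrow> real) \<Rightarrow> real) \<Rightarrow> real" where
  "alpha \<phi> = Inf {integral\<^sup>L M \<phi> | M. invariant_prob M}"

definition Bset :: "(nat \<Rightarrow> real) \<Rightarrow> (nat \<Rightarrow> real) \<Rightarrow> nat \<Rightarrow> real \<Rightarrow> (nat \<Rightarrow> real) set" where
  "Bset x y n \<epsilon> = {z \<in> XX. dX x z < \<epsilon> \<and> dX ((shift ^^ n) z) y < \<epsilon>}"

definition mane :: "((nat \<Rightarrow> real) \<Rightarrow> real) \<Rightarrow> (nat \<Rightarrow> real) \<Rightarrow> (nat \<Rightarrow> real) \<Rightarrow> ereal" where
  "mane \<phi> x y = Lim (at_right (0::real))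
     (\<lambda>\<epsilon>. Inf {ereal (\<Sum>i<n. \<phi> ((shift ^^ i) z) - alpha \<phi>) | n z. n \<ge> 1 \<and> z \<in> Bset x y n \<epsilon>})"

definition aubry :: "((nat \<Rightarrow> real) \<Rightarrow> real) \<Rightarrow> (nat \<Rightarrow> real) set" where
  "aubry \<phi> = {x \<in> XX. mane \<phi> x x = 0}"

definition continuous_X :: "((nat \<Rightarrow> real) \<Rightarrow> real) \<Rightarrow> bool" where
  "continuous_X u \<longleftrightarrow> (\<forall>x\<in>XX. \<forall>e>0. \<exists>\<delta>>0. \<forall>y\<in>XX. dX x y < \<delta> \<longrightarrow> \<bar>u y - u x\<bar> < e)"

definition lipschitz_X :: "((nat \<Rightarrow> real) \<Rightarrow> real) \<Rightarrow> bool" where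
  "lipschitz_X \<phi> \<longleftrightarrow> (\<exists>L. \<forall>x\<in>XX. \<forall>y\<in>XX. \<bar>\<phi> x - \<phi> y\<bar> \<le> L * dX x y)"

definition subaction :: "((nat \<Rightarrow> real) \<Rightarrow> real) \<Rightarrow> ((nat \<Rightarrow> real) \<Rightarrow> real) \<Rightarrow> bool" where
  "subaction \<phi> u \<longleftrightarrow> continuous_X u \<and>
     (\<forall>x\<in>XX. u x + \<phi> x \<ge> u (shift x) + alpha \<phi>)"

definition calibrated :: "((nat \<Rightarrow> real) \<Rightarrow> real) \<Rightarrow> ((nat \<Rightarrow> real) \<Rightarrow> real) \<Rightarrow> bool" where
  "calibrated \<phi> u \<longleftrightarrow> subaction \<phi> u \<and>
     (\<forall>x\<in>XX. (\<exists>y\<in>XX. shift y = x \<and> \<phi> y + u y = u x + alpha \<phi>) \<and>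
              (\<forall>y\<in>XX. shift y = x \<longrightarrow> \<phi> y + u y \<ge> u x + alpha \<phi>))"

definition accumulation_point :: "(nat \<Rightarrow> (nat \<Rightarrow> real)) \<Rightarrow> (nat \<Rightarrow> real) \<Rightarrow> bool" where
  "accumulation_point ys p \<longleftrightarrow> p \<in> XX \<and> (\<forall>e>0. \<forall>N. \<exists>n\<ge>N. dX (ys n) p < e)"

end

theory Submission
  imports Defs
begin

text \<open>For a subaction u the Birkhoff sums of \<open>\<phi> - \<alpha>\<^sub>\<phi>\<close> along any orbit segment
  dominate the increment of u, so by continuity of u every orbit segment from near p back
  to near p has normalised sum \<open>\<ge> -c\<close>. Along a calibrated backward orbit these sums are
  exactly the increments of u; two visits of the orbit close to an accumulation point p give
  a segment with sum \<open>\<le> c\<close>. Hence the Mane potential vanishes at (p, p).\<close>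

definition calibrated_preorbit ::
  "((nat \<Rightarrow> real) \<Rightarrow> real) \<Rightarrow> ((nat \<Rightarrow> real) \<Rightarrow> real) \<Rightarrow> (nat \<Rightarrow> nat \<Rightarrow> real) \<Rightarrow> bool" where
  "calibrated_preorbit \<phi> u ys \<longleftrightarrow> (\<forall>n\<ge>1. shift (ys n) = ys (n - 1) \<and>
     u (ys (n - 1)) = \<phi> (ys n) + u (ys n) - alpha \<phi>)"

definition mane_sums ::
  "((nat \<Rightarrow> real) \<Rightarrow> real) \<Rightarrow> (nat \<Rightarrow> real) \<Rightarrow> (nat \<Rightarrow> real) \<Rightarrow> real \<Rightarrow> ereal set" where
  "mane_sums \<phi> x y \<epsilon> =
     {ereal (\<Sum>i<n. \<phi> ((shift ^^ i) z) - alpha \<phi>) | n z. n \<ge> 1 \<and> z \<in> Bset x y n \<epsilon>}"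

lemma mane_eq_Lim_mane_sums:
  "mane \<phi> x y = Lim (at_right 0) (\<lambda>\<epsilon>. Inf (mane_sums \<phi> x y \<epsilon>))"
  unfolding mane_def mane_sums_def ..

lemma dX_commute: "dX x y = dX y x"
  unfolding dX_def by (simp add: abs_minus_commute)

lemma shift_in_XX: "x \<in> XX \<Longrightarrow> shift x \<in> XX"
  unfolding XX_def shift_def by auto

lemma funpow_shift_in_XX: "x \<in> XX \<Longrightarrow> (shift ^^ n) x \<in> XX"
  by (induction n) (auto simp: shift_in_XX)

lemma accumulation_point_Suc_imp:
  assumes "accumulation_point (\<lambda>n. ys (n + 1)) p"
  shows "accumulation_point ys p"
  unfolding accumulation_point_def
proof (intro conjI allI impI)
  show "p \<in> XX"
    using assms unfolding accumulation_point_def by simp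
  fix e :: real and N :: nat
  assume "e > 0"
  then obtain n where "n \<ge> N" "dX (ys (n + 1)) p < e"
    using assms unfolding accumulation_point_def by blast
  then show "\<exists>n\<ge>N. dX (ys n) p < e"
    by (intro exI[of _ "n + 1"]) simp
qed

lemma ereal_tendsto_zeroI:
  fixes f :: "'a \<Rightarrow> ereal"
  assumes "\<And>c. c > 0 \<Longrightarrow> eventually (\<lambda>x. ereal (-c) \<le> f x \<and> f x \<le> ereal c) F"
  shows "(f \<longlongrightarrow> 0) F"
proof (rule order_tendstoI)
  fix a :: ereal
  assume "a < 0"
  then obtain r where r: "a < ereal r" "ereal r < 0"
    using ereal_dense2 by blast
  then have "eventually (\<lambda>x. ereal r \<le> f x) F"
    using assms[of "-r"] by (simp add: eventually_conj_iff)
  then show "eventually (\<lambda>x. a < f x) F"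
    by (rule eventually_mono) (use r(1) in simp)
next
  fix a :: ereal
  assume "a > 0"
  then obtain r where r: "0 < ereal r" "ereal r < a"
    using ereal_dense2 by blast
  then have "eventually (\<lambda>x. f x \<le> ereal r) F"
    using assms[of r] by (simp add: eventually_conj_iff)
  then show "eventually (\<lambda>x. f x < a) F"
    by (rule eventually_mono) (use r(2) in simp)
qed

lemma subaction_sum_ge:
  assumes "subaction \<phi> u" "z \<in> XX"
  shows "u ((shift ^^ n) z) - u z \<le> (\<Sum>i<n. \<phi> ((shift ^^ i) z) - alpha \<phi>)"
proof (induction n)
  case (Suc n)
  have "u (shift ((shift ^^ n) z)) + alpha \<phi> \<le> u ((shift ^^ n) z) + \<phi> ((shift ^^ n) z)"
    using assms funpow_shift_in_XX unfolding subaction_def by blast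
  with Suc show ?case by simp
qed simp

lemma calibrated_preorbit_funpow_shift:
  assumes "calibrated_preorbit \<phi> u ys" "i \<le> n"
  shows "(shift ^^ i) (ys n) = ys (n - i)"
  using assms(2)
proof (induction i)
  case (Suc i)
  have "n - i \<ge> 1" "n - Suc i = n - i - 1"
    using Suc.prems by auto
  then have "shift (ys (n - i)) = ys (n - Suc i)"
    using assms(1) unfolding calibrated_preorbit_def by metis
  with Suc show ?case by simp
qed simp

lemma calibrated_preorbit_sum:
  assumes "calibrated_preorbit \<phi> u ys" "k \<le> n"
  shows "(\<Sum>i<k. \<phi> ((shift ^^ i) (ys n)) - alpha \<phi>) = u (ys (n - k)) - u (ys n)"
  using assms(2)
proof (induction k)
  case (Suc k)
  have "n - k \<ge> 1" "n - Suc k = n - k - 1"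
    using Suc.prems by auto
  then have "u (ys (n - Suc k)) = \<phi> (ys (n - k)) + u (ys (n - k)) - alpha \<phi>"
    using assms(1) unfolding calibrated_preorbit_def by metis
  with Suc calibrated_preorbit_funpow_shift[OF assms(1), of k n] show ?case
    by simp
qed simp

lemma continuous_XD:
  assumes "continuous_X u" "x \<in> XX" "e > 0"
  obtains \<delta> where "\<delta> > 0" "\<And>z. z \<in> XX \<Longrightarrow> dX x z < \<delta> \<Longrightarrow> \<bar>u z - u x\<bar> < e"
  using assms unfolding continuous_X_def by blast

lemma Inf_mane_sums_ge:
  assumes "subaction \<phi> u" "x \<in> XX" "y \<in> XX" "c > 0"
  shows "eventually (\<lambda>\<epsilon>. ereal (u y - u x - c) \<le> Inf (mane_sums \<phi> x y \<epsilon>)) (at_right 0)"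
proof -
  have cont: "continuous_X u" and c2: "c / 2 > 0"
    using assms(1,4) unfolding subaction_def by simp_all
  obtain \<delta>x where \<delta>x: "\<delta>x > 0" "\<And>z. z \<in> XX \<Longrightarrow> dX x z < \<delta>x \<Longrightarrow> \<bar>u z - u x\<bar> < c / 2"
    using continuous_XD[OF cont assms(2) c2] by blast
  obtain \<delta>y where \<delta>y: "\<delta>y > 0" "\<And>z. z \<in> XX \<Longrightarrow> dX y z < \<delta>y \<Longrightarrow> \<bar>u z - u y\<bar> < c / 2"
    using continuous_XD[OF cont assms(3) c2] by blast
  have "ereal (u y - u x - c) \<le> Inf (mane_sums \<phi> x y \<epsilon>)"
    if "0 < \<epsilon>" "\<epsilon> < min \<delta>x \<delta>y" for \<epsilon>
  proof (rule Inf_greatest)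
    fix s
    assume "s \<in> mane_sums \<phi> x y \<epsilon>"
    then obtain n z where s: "s = ereal (\<Sum>i<n. \<phi> ((shift ^^ i) z) - alpha \<phi>)"
      and z: "z \<in> XX" "dX x z < \<epsilon>" "dX y ((shift ^^ n) z) < \<epsilon>"
      unfolding mane_sums_def Bset_def by (auto simp: dX_commute[of _ y])
    have "\<bar>u z - u x\<bar> < c / 2"
      using \<delta>x(2)[OF z(1)] z(2) that by simp
    moreover have "\<bar>u ((shift ^^ n) z) - u y\<bar> < c / 2"
      using \<delta>y(2)[OF funpow_shift_in_XX[OF z(1)]] z(3) that by simp
    ultimately have "u y - u x - c \<le> (\<Sum>i<n. \<phi> ((shift ^^ i) z) - alpha \<phi>)"
      using subaction_sum_ge[OF assms(1) z(1), of n] by linarith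
    then show "ereal (u y - u x - c) \<le> s"
      unfolding s by simp
  qed
  then show ?thesis
    unfolding eventually_at_right_field using \<delta>x(1) \<delta>y(1)
    by (intro exI[of _ "min \<delta>x \<delta>y"]) simp
qed

lemma Inf_mane_sums_le:
  assumes "continuous_X u" "calibrated_preorbit \<phi> u ys" "\<forall>n. ys n \<in> XX"
    and "accumulation_point ys p" "\<epsilon> > 0" "c > 0"
  shows "Inf (mane_sums \<phi> p p \<epsilon>) \<le> ereal c"
proof -
  have p: "p \<in> XX" and c2: "c / 2 > 0"
    using assms(4,6) unfolding accumulation_point_def by simp_all
  obtain \<delta> where \<delta>: "\<delta> > 0" "\<And>z. z \<in> XX \<Longrightarrow> dX p z < \<delta> \<Longrightarrow> \<bar>u z - u p\<bar> < c / 2"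
    using continuous_XD[OF assms(1) p c2] by blast
  define r where "r = min \<epsilon> \<delta>"
  have "r > 0"
    using \<delta>(1) assms(5) unfolding r_def by simp
  then obtain m n where "dX (ys m) p < r" "n \<ge> Suc m" "dX (ys n) p < r"
    using assms(4) unfolding accumulation_point_def by blast
  then have mn: "m < n" "dX p (ys m) < r" "dX p (ys n) < r"
    by (simp_all add: dX_commute)
  have "(shift ^^ (n - m)) (ys n) = ys m"
    using calibrated_preorbit_funpow_shift[OF assms(2), of "n - m" n] mn(1) by simp
  then have "ys n \<in> Bset p p (n - m) \<epsilon>"
    using mn assms(3) unfolding Bset_def r_def by (simp add: dX_commute)
  moreover have "(\<Sum>i<n - m. \<phi> ((shift ^^ i) (ys n)) - alpha \<phi>) = u (ys m) - u (ys n)"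
    using calibrated_preorbit_sum[OF assms(2), of "n - m" n] mn(1) by simp
  ultimately have "ereal (u (ys m) - u (ys n)) \<in> mane_sums \<phi> p p \<epsilon>"
    unfolding mane_sums_def mem_Collect_eq using mn(1)
    by (intro exI[of _ "n - m"] exI[of _ "ys n"]) simp
  moreover have "\<bar>u (ys m) - u p\<bar> < c / 2" "\<bar>u (ys n) - u p\<bar> < c / 2"
    using \<delta>(2) mn(2,3) assms(3) unfolding r_def by simp_all
  then have "u (ys m) - u (ys n) \<le> c"
    by linarith
  ultimately show ?thesis
    by (intro Inf_lower2[of "ereal (u (ys m) - u (ys n))"]) simp_all
qed

theorem lemma2p13:
  fixes \<phi> u :: "(nat \<Rightarrow> real) \<Rightarrow> real" and ys :: "nat \<Rightarrow> (nat \<Rightarrow> real)"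
  assumes "lipschitz_X \<phi>"
    and "calibrated \<phi> u"
    and "\<forall>n. ys n \<in> XX"
    and "\<forall>n\<ge>1. shift (ys n) = ys (n - 1) \<and>
            u (ys (n - 1)) = \<phi> (ys n) + u (ys n) - alpha \<phi>"
    and "accumulation_point (\<lambda>n. ys (n + 1)) p"
  shows "p \<in> aubry \<phi>"
proof -
  have sub: "subaction \<phi> u" and orbit: "calibrated_preorbit \<phi> u ys"
    using assms(2,4) unfolding calibrated_def calibrated_preorbit_def by auto
  then have cont: "continuous_X u"
    unfolding subaction_def by simp
  have acc: "accumulation_point ys p"
    using assms(5) by (rule accumulation_point_Suc_imp)
  then have p: "p \<in> XX"
    unfolding accumulation_point_def by simp
  have "((\<lambda>\<epsilon>. Inf (mane_sums \<phi> p p \<epsilon>)) \<longlongrightarrow> 0) (at_right 0)"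
  proof (rule ereal_tendsto_zeroI)
    fix c :: real
    assume "c > 0"
    have "eventually (\<lambda>\<epsilon>. ereal (-c) \<le> Inf (mane_sums \<phi> p p \<epsilon>)) (at_right 0)"
      using Inf_mane_sums_ge[OF sub p p \<open>c > 0\<close>] by simp
    moreover have "eventually (\<lambda>\<epsilon>. Inf (mane_sums \<phi> p p \<epsilon>) \<le> ereal c) (at_right 0)"
      using eventually_at_right_less
      by (rule eventually_mono) (rule Inf_mane_sums_le[OF cont orbit assms(3) acc _ \<open>c > 0\<close>])
    ultimately show "eventually (\<lambda>\<epsilon>. ereal (-c) \<le> Inf (mane_sums \<phi> p p \<epsilon>) \<and>
        Inf (mane_sums \<phi> p p \<epsilon>) \<le> ereal c) (at_right 0)"
      by (rule eventually_conj)
  qed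
  then have "mane \<phi> p p = 0"
    unfolding mane_eq_Lim_mane_sums by (intro tendsto_Lim) simp_all
  with p show ?thesis
    unfolding aubry_def by simp
qed

end
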